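(* Consider the multi-agent system $\dot{x}_i=Ax_i+Bu_i$, $i=1,\dots,N$, with $x_i\in\mathbb{R}^n$, $u_i\in\mathbb{R}^m$, $A\in\mathbb{R}^{n\times n}$, $B\in\mathbb{R}^{n\times m}$. The communication topology is a weighted directed graph $\mathcal{G}=(V,E,W)$, $V=\{1,\dots,N\}$, with adjacency matrix $W=[w_{ij}]$, $w_{ij}\ge 0$ and $w_{ij}>0$ iff $(j,i)\in E$ (agent $j$ sends information to agent $i$). Suppose $\mathcal{G}$ has a directed spanning tree $\mathcal{T}$ with root node $N$, in which each node $i\in\{1,\dots,N-1\}$ has unique parent $k_i$ with $(k_i,i)\in E$, and suppose the root node $N$ of $\mathcal{T}$ is a root vertex in $\mathcal{G}$. Consider the protocol $$u_N=0,\qquad u_i=K_i\,w_{i,k_i}\,(x_{k_i}-x_i),\quad i=1,\dots,N-1,$$ with $K_i\in\mathbb{R}^{m\times n}$. If the gains $K_i$ are chosen such that $A-w_{i,k_i}BK_i$ is Hurwitz for each $i=1,\dots,N-1$, then the closed-loop system achieves asymptotic state consensus, i.e. $\lim_{t\to\infty}\|x_i(t)-x_j(t)\|=0$ for all $i,j\in\{1,\dots,N\}$ and all initial conditions $x_1(0),\dots,x_N(0)\in\mathbb{R}^n$.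
   Context: A matrix is Hurwitz if all its eigenvalues have negative real part. A directed spanning tree of $\mathcal{G}$ rooted at $N$ is a subgraph using edges of $\mathcal{G}$ containing a unique directed path from $N$ to every other vertex. A root vertex of $\mathcal{G}$ is a vertex from which there is a directed path to every other vertex. *)

theory Defs
  imports "HOL-Analysis.Analysis"
begin

definition cmat :: "real^'n^'n \<Rightarrow> complex^'n^'n" where
  "cmat A = (\<chi> i j. complex_of_real (A $ i $ j))"

definition eigenvalue :: "real^'n^'n \<Rightarrow> complex \<Rightarrow> bool" where
  "eigenvalue A c \<longleftrightarrow> (\<exists>v::complex^'n. v \<noteq> 0 \<and> cmat A *v v = c *s v)"

definition hurwitz :: "real^'n^'n \<Rightarrow> bool" where
  "hurwitz A \<longleftrightarrow> (\<forall>c. eigenvalue A c \<longrightarrow> Re c < 0)"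

definition graph_edges :: "nat \<Rightarrow> (nat \<Rightarrow> nat \<Rightarrow> real) \<Rightarrow> (nat \<times> nat) set" where
  "graph_edges N W = {(j, i). j \<in> {1..N} \<and> i \<in> {1..N} \<and> W i j > 0}"

definition root_vertex :: "nat \<Rightarrow> (nat \<Rightarrow> nat \<Rightarrow> real) \<Rightarrow> nat \<Rightarrow> bool" where
  "root_vertex N W r \<longleftrightarrow> r \<in> {1..N} \<and> (\<forall>v\<in>{1..N}. (r, v) \<in> (graph_edges N W)\<^sup>*)"

text \<open>The parent map k describes a directed spanning tree of the graph rooted at N:
  every non-root node i has a parent k i, (k i, i) is an edge of the graph,
  and following parents from any node leads to the root N (so the tree contains
  a unique directed path from N to every vertex).\<close>
definition spanning_tree_parent :: "nat \<Rightarrow> (nat \<Rightarrow> nat \<Rightarrow> real) \<Rightarrow> (nat \<Rightarrow> nat) \<Rightarrow> bool" where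
  "spanning_tree_parent N W k \<longleftrightarrow>
     (\<forall>i\<in>{1..N-1}. k i \<in> {1..N} \<and> (k i, i) \<in> graph_edges N W \<and> (\<exists>p. (k ^^ p) i = N))"

end

(* Along a tree edge the disagreement e = x_i - x_(k_i) obeys
     e' = (A - w_(i,k_i) B K_i) e - B u_(k_i),
   a Hurwitz system driven by the input of the parent. Inducting on the depth of i in the tree,
   u_(k_i) -> 0, hence e -> 0 and then u_i -> 0; so every agent converges to the root N.

   That a Hurwitz system z' = M z + g with g -> 0 has z -> 0 is shown without matrix
   exponentials: some product (M - l_1) ... (M - l_r) of shifts by eigenvalues l_j of M vanishes
   (factor an annihilating polynomial over the complex numbers and drop the injective factors),
   and peeling off one shift at a time reduces to z' = l z + h with Re l < 0 and h -> 0,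
   which an energy estimate on |z|^2 settles. *)

theory Submission
  imports Defs "HOL-Computational_Algebra.Fundamental_Theorem_Algebra"
begin

section \<open>Annihilating products of eigenvalue shifts\<close>

definition mat_shift :: "complex^'n^'n \<Rightarrow> complex \<Rightarrow> complex^'n \<Rightarrow> complex^'n" where
  "mat_shift C l v = C *v v - l *s v"

fun matpow :: "complex^'n^'n \<Rightarrow> nat \<Rightarrow> complex^'n^'n" where
  "matpow C 0 = mat 1"
| "matpow C (Suc i) = matpow C i ** C"

definition poly_apply :: "complex^'n^'n \<Rightarrow> complex poly \<Rightarrow> complex^'n \<Rightarrow> complex^'n" where
  "poly_apply C p v = (\<Sum>i\<le>degree p. coeff p i *s (matpow C i *v v))"

lemma poly_apply_eq_sum:
  "degree p \<le> n \<Longrightarrow> poly_apply C p v = (\<Sum>i\<le>n. coeff p i *s (matpow C i *v v))"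
  unfolding poly_apply_def by (rule sum.mono_neutral_left) (auto simp: coeff_eq_0)

lemma poly_apply_smult: "poly_apply C (smult c p) v = c *s poly_apply C p v"
  using degree_smult_le[of c p]
  by (simp add: poly_apply_eq_sum[of _ "degree p"] poly_apply_def sum_cmul[symmetric]
      vector_smult_assoc)

lemma poly_apply_linear_factor: "poly_apply C ([:-a,1:] * p) v = poly_apply C p (mat_shift C a v)"
proof -
  define n where "n = Suc (degree p)"
  have "degree ([:-a,1:] * p) \<le> n"
    using degree_mult_le[of "[:-a,1:]" p] by (simp add: n_def)
  moreover have
    "coeff ([:-a,1:] * p) i = - a * coeff p i + (case i of 0 \<Rightarrow> 0 | Suc j \<Rightarrow> coeff p j)" for i
    by (simp add: coeff_pCons split: nat.splits)
  ultimately have "poly_apply C ([:-a,1:] * p) v = (\<Sum>i\<le>n. (- a * coeff p i) *s (matpow C i *v v))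
      + (\<Sum>i\<le>n. (case i of 0 \<Rightarrow> 0 | Suc j \<Rightarrow> coeff p j) *s (matpow C i *v v))"
    by (simp add: poly_apply_eq_sum sum.distrib[symmetric] vector_sadd_rdistrib)
  also have "(\<Sum>i\<le>n. (- a * coeff p i) *s (matpow C i *v v)) = - a *s poly_apply C p v"
    by (simp add: poly_apply_eq_sum[of p n] n_def sum_cmul[symmetric] vector_smult_assoc)
  also have "(\<Sum>i\<le>n. (case i of 0 \<Rightarrow> 0 | Suc j \<Rightarrow> coeff p j) *s (matpow C i *v v))
      = poly_apply C p (C *v v)"
    unfolding n_def sum.atMost_Suc_shift by (simp add: poly_apply_def matrix_vector_mul_assoc)
  also have "poly_apply C p (C *v v) = poly_apply C p (mat_shift C a v) + a *s poly_apply C p v"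
    by (simp add: poly_apply_def mat_shift_def sum_cmul[symmetric] sum.distrib[symmetric]
        matrix_vector_mult_diff_distrib vector_scalar_commute vector_ssub_ldistrib
        vector_smult_assoc mult.commute)
  finally show ?thesis by simp
qed

lemma poly_apply_prod_linear_factors:
  "poly_apply C (\<Prod>l\<leftarrow>ls. [:-l,1:]) v = fold (mat_shift C) ls v"
proof (induction ls arbitrary: v)
  case Nil
  show ?case by (simp add: poly_apply_def)
next
  case (Cons l ls)
  show ?case using poly_apply_linear_factor[of C l "\<Prod>l\<leftarrow>ls. [:-l,1:]" v] Cons by simp
qed

lemma fold_mat_shift_eq_0_imp_eq_0:
  assumes "\<forall>l\<in>set ls. \<forall>w. C *v w = l *s w \<longrightarrow> w = 0"
    and "fold (mat_shift C) ls v = 0"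
  shows "v = 0"
  using assms
proof (induction ls arbitrary: v)
  case (Cons l ls)
  have "mat_shift C l v = 0"
    by (rule Cons.IH) (use Cons.prems in simp_all)
  then show ?case using Cons.prems(1) by (simp add: mat_shift_def)
qed simp


lemma scaleR_matrix_vector_mult:
  fixes M :: "'a::real_algebra_1^'m^'n"
  shows "(r *\<^sub>R M) *v v = r *\<^sub>R (M *v v)"
  by (simp add: vec_eq_iff matrix_vector_mult_def scaleR_sum_right)

lemma of_real_smult_eq_scaleR: "of_real r *s (v::'a::real_algebra_1^'n) = r *\<^sub>R v"
  by (simp add: vec_eq_iff of_real_def)

lemma ex_nontrivial_linear_relation:
  fixes f :: "nat \<Rightarrow> 'a::euclidean_space"
  obtains c i where "i \<le> DIM('a)" "c i \<noteq> 0" "(\<Sum>j\<le>DIM('a). c j *\<^sub>R f j) = 0"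
proof (cases "inj_on f {..DIM('a)}")
  case True
  then have "dependent (f ` {..DIM('a)})"
    by (intro dependent_biggerset) (simp add: card_image)
  then obtain u where "\<exists>v\<in>f ` {..DIM('a)}. u v \<noteq> 0" "(\<Sum>v\<in>f ` {..DIM('a)}. u v *\<^sub>R v) = 0"
    using real_vector.dependent_finite by blast
  with True show ?thesis
    using that[of _ "u \<circ> f"] by (auto simp: sum.reindex)
next
  case False
  then obtain i j where ij: "i \<le> DIM('a)" "j \<le> DIM('a)" "i \<noteq> j" "f i = f j"
    by (auto simp: inj_on_def)
  define c :: "nat \<Rightarrow> real" where "c l = (if l = i then 1 else if l = j then -1 else 0)" for l
  have "c l *\<^sub>R f l = (if l = i then f i else 0) - (if l = j then f j else 0)" for l
    using ij by (simp add: c_def)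
  then have "(\<Sum>l\<le>DIM('a). c l *\<^sub>R f l) = 0"
    using ij by (simp add: sum_subtractf)
  with ij show ?thesis
    using that[of i c] by (simp add: c_def)
qed

lemma ex_annihilating_poly:
  fixes C :: "complex^'n^'n"
  obtains q where "q \<noteq> 0" "\<And>v. poly_apply C q v = 0"
proof -
  define D where "D = DIM(complex^'n^'n)"
  obtain c i where ci: "i \<le> D" "c i \<noteq> 0" and rel: "(\<Sum>j\<le>D. c j *\<^sub>R matpow C j) = 0"
    using ex_nontrivial_linear_relation[of "matpow C"] unfolding D_def by blast
  define q where "q = (\<Sum>j\<le>D. monom (complex_of_real (c j)) j)"
  have coeff_q: "coeff q j = (if j \<le> D then complex_of_real (c j) else 0)" for j
    by (simp add: q_def coeff_sum coeff_monom)
  have "coeff q i \<noteq> 0"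
    using ci by (simp add: coeff_q)
  then have "q \<noteq> 0" by auto
  moreover have "poly_apply C q v = 0" for v
  proof -
    have "degree q \<le> D"
      by (rule degree_le) (simp add: coeff_q)
    then have "poly_apply C q v = (\<Sum>j\<le>D. c j *\<^sub>R (matpow C j *v v))"
      by (simp add: poly_apply_eq_sum coeff_q of_real_smult_eq_scaleR)
    also have "\<dots> = (\<Sum>j\<le>D. c j *\<^sub>R matpow C j) *v v"
      by (induction D) (simp_all add: matrix_vector_mult_add_rdistrib scaleR_matrix_vector_mult)
    finally show ?thesis
      by (simp add: rel)
  qed
  ultimately show ?thesis by (rule that)
qed

lemma ex_eigenvalue_shifts_annihilate:
  fixes C :: "complex^'n^'n"
  obtains ls where "\<forall>l\<in>set ls. \<exists>v. v \<noteq> 0 \<and> C *v v = l *s v" "\<And>v. fold (mat_shift C) ls v = 0"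
proof -
  obtain q where q: "q \<noteq> 0" "\<And>v. poly_apply C q v = 0"
    using ex_annihilating_poly[of C] by blast
  obtain roots where roots: "mset roots = proots q"
    using ex_mset by blast
  define eig where "eig l \<longleftrightarrow> (\<exists>v. v \<noteq> 0 \<and> C *v v = l *s v)" for l
  define ls where "ls = filter eig roots"
  define rs where "rs = filter (\<lambda>l. \<not> eig l) roots"
  have "mset (ls @ rs) = proots q"
    by (simp add: ls_def rs_def roots[symmetric])
  then have q_eq: "q = smult (lead_coeff q) (\<Prod>l\<leftarrow>ls @ rs. [:-l,1:])"
    using complex_poly_decompose_multiset[of q] by (metis mset_map prod_mset_prod_list)
  \<comment> \<open>The shifts by roots that are not eigenvalues are injective and cancel.\<close>
  have "fold (mat_shift C) ls v = 0" for v
  proof -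
    have "poly_apply C q v = lead_coeff q *s fold (mat_shift C) (ls @ rs) v"
      by (subst (1) q_eq) (simp only: poly_apply_smult poly_apply_prod_linear_factors)
    then have "fold (mat_shift C) rs (fold (mat_shift C) ls v) = 0"
      using q by (simp add: vector_mul_eq_0)
    then show ?thesis
      by (rule fold_mat_shift_eq_0_imp_eq_0[rotated]) (auto simp: rs_def eig_def)
  qed
  moreover have "\<forall>l\<in>set ls. eig l"
    by (simp add: ls_def)
  ultimately show ?thesis
    using that unfolding eig_def by blast
qed

section \<open>Decay under a differential inequality\<close>

lemma tendsto_zero_of_deriv_le:
  fixes \<phi> \<phi>' g :: "real \<Rightarrow> real" and a :: real
  assumes a: "a > 0"
    and deriv: "\<forall>\<^sub>F t in at_top. (\<phi> has_real_derivative \<phi>' t) (at t)"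
    and ineq: "\<forall>\<^sub>F t in at_top. \<phi>' t \<le> - a * \<phi> t + g t"
    and nonneg: "\<forall>\<^sub>F t in at_top. \<phi> t \<ge> 0"
    and g: "(g \<longlongrightarrow> 0) at_top"
  shows "(\<phi> \<longlongrightarrow> 0) at_top"
proof (rule tendstoI)
  fix \<epsilon> :: real
  assume "\<epsilon> > 0"
  have "\<forall>\<^sub>F t in at_top. g t < a * \<epsilon> / 2"
    using g by (rule order_tendstoD) (use a \<open>\<epsilon> > 0\<close> in simp)
  with deriv ineq nonneg have "\<forall>\<^sub>F t in at_top. (\<phi> has_real_derivative \<phi>' t) (at t) \<and>
      \<phi>' t \<le> - a * \<phi> t + g t \<and> \<phi> t \<ge> 0 \<and> g t < a * \<epsilon> / 2"
    by (intro eventually_conj)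
  then obtain T where T: "\<And>t. t \<ge> T \<Longrightarrow> (\<phi> has_real_derivative \<phi>' t) (at t) \<and>
      \<phi>' t \<le> - a * \<phi> t + g t \<and> \<phi> t \<ge> 0 \<and> g t < a * \<epsilon> / 2"
    by (auto simp: eventually_at_top_linorder)
  \<comment> \<open>The weighted excess \<open>exp (a s) * (\<phi> s - \<epsilon> / 2)\<close> is nonincreasing from \<open>T\<close> on.\<close>
  have excess: "\<phi> t - \<epsilon> / 2 \<le> exp (a * (T - t)) * (\<phi> T - \<epsilon> / 2)" if "t \<ge> T" for t
  proof -
    have "exp (a * t) * (\<phi> t - \<epsilon> / 2) \<le> exp (a * T) * (\<phi> T - \<epsilon> / 2)"
    proof (rule DERIV_nonpos_imp_nonincreasing[OF that], intro exI conjI)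
      fix s assume "T \<le> s"
      with T have s: "(\<phi> has_real_derivative \<phi>' s) (at s)"
          "\<phi>' s \<le> - a * \<phi> s + g s" "g s < a * \<epsilon> / 2"
        by auto
      show "((\<lambda>s. exp (a * s) * (\<phi> s - \<epsilon> / 2)) has_real_derivative
          exp (a * s) * (a * (\<phi> s - \<epsilon> / 2) + \<phi>' s)) (at s)"
        by (auto intro!: derivative_eq_intros s(1) simp: algebra_simps)
      show "exp (a * s) * (a * (\<phi> s - \<epsilon> / 2) + \<phi>' s) \<le> 0"
        using s(2,3) by (intro mult_nonneg_nonpos) (auto simp: algebra_simps)
    qed
    then have "exp (a * t) * (\<phi> t - \<epsilon> / 2) \<le> exp (a * t) * (exp (a * (T - t)) * (\<phi> T - \<epsilon> / 2))"
      by (simp add: mult.assoc[symmetric] algebra_simps flip: exp_add)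
    then show ?thesis
      by simp
  qed
  have "((\<lambda>t. exp (a * (T - t)) * (\<phi> T - \<epsilon> / 2)) \<longlongrightarrow> 0 * (\<phi> T - \<epsilon> / 2)) at_top"
  proof (intro tendsto_mult_right tendsto_const filterlim_compose[OF exp_at_bot])
    show "filterlim (\<lambda>t. a * (T - t)) at_bot at_top"
    proof -
      have "filterlim (\<lambda>t. - (a * T) + a * t) at_top at_top"
        by (intro filterlim_tendsto_add_at_top[OF tendsto_const]
            filterlim_tendsto_pos_mult_at_top[OF tendsto_const a] filterlim_ident)
      then show ?thesis
        by (simp add: filterlim_uminus_at_bot algebra_simps)
    qed
  qed
  then have "\<forall>\<^sub>F t in at_top. exp (a * (T - t)) * (\<phi> T - \<epsilon> / 2) < \<epsilon> / 2"
    by (rule order_tendstoD) (use \<open>\<epsilon> > 0\<close> in simp)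
  moreover have "\<forall>\<^sub>F t in at_top. t \<ge> T"
    by (rule eventually_ge_at_top)
  ultimately show "\<forall>\<^sub>F t in at_top. dist (\<phi> t) 0 < \<epsilon>"
  proof eventually_elim
    case (elim t)
    then show ?case
      using excess[of t] T[of t] by simp
  qed
qed

lemma tendsto_zero_of_inner_deriv_le:
  fixes z d h :: "real \<Rightarrow> 'a::real_inner" and a :: real
  assumes a: "a > 0"
    and deriv: "\<forall>\<^sub>F t in at_top. (z has_vector_derivative d t) (at t)"
    and ineq: "\<forall>\<^sub>F t in at_top. z t \<bullet> d t \<le> - a * (norm (z t))\<^sup>2 + norm (z t) * norm (h t)"
    and h: "(h \<longlongrightarrow> 0) at_top"
  shows "(z \<longlongrightarrow> 0) at_top"
proof -
  have amgm: "2 * n * m \<le> a * n\<^sup>2 + m\<^sup>2 / a" for n m :: real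
  proof -
    have "0 \<le> (a * n - m)\<^sup>2 / a"
      using a by simp
    also have "\<dots> = a * n\<^sup>2 - 2 * n * m + m\<^sup>2 / a"
      using a by (simp add: power2_eq_square field_simps)
    finally show ?thesis by simp
  qed
  have "((\<lambda>t. norm (z t) ^ 2) \<longlongrightarrow> 0) at_top"
  proof (rule tendsto_zero_of_deriv_le[OF a])
    show "\<forall>\<^sub>F t in at_top. ((\<lambda>t. norm (z t) ^ 2) has_real_derivative 2 * (z t \<bullet> d t)) (at t)"
      using deriv
    proof eventually_elim
      case (elim t)
      then have "((\<lambda>t. z t \<bullet> z t) has_real_derivative 2 * (z t \<bullet> d t)) (at t)"
        by (auto intro!: derivative_eq_intros
            simp: has_vector_derivative_def has_field_derivative_def inner_commute algebra_simps)
      then show ?case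
        by (simp add: power2_norm_eq_inner)
    qed
    show "\<forall>\<^sub>F t in at_top. 2 * (z t \<bullet> d t) \<le> - a * (norm (z t))\<^sup>2 + (norm (h t))\<^sup>2 / a"
      using ineq
    proof eventually_elim
      case (elim t)
      then show ?case
        using amgm[of "norm (z t)" "norm (h t)"] by linarith
    qed
    show "((\<lambda>t. (norm (h t))\<^sup>2 / a) \<longlongrightarrow> 0) at_top"
      using tendsto_divide[OF tendsto_power[OF tendsto_norm_zero[OF h], of 2] tendsto_const, of a] a
      by simp
  qed simp
  then have "((\<lambda>t. sqrt (norm (z t) ^ 2)) \<longlongrightarrow> sqrt 0) at_top"
    by (rule tendsto_real_sqrt)
  then show ?thesis
    by (simp add: tendsto_norm_zero_iff)
qed

section \<open>Hurwitz systems driven by a vanishing input\<close>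

lemma bounded_linear_mat_shift: "bounded_linear (mat_shift C l)"
proof -
  have "linear (mat_shift C l)"
    by (rule linearI)
      (simp_all add: mat_shift_def vec_eq_iff matrix_vector_mult_def sum.distrib scaleR_sum_right
        algebra_simps)
  then show ?thesis
    by (simp add: linear_conv_bounded_linear)
qed

lemma inner_smult_self_right: "(z::complex^'n) \<bullet> (l *s z) = Re l * (z \<bullet> z)"
  by (simp add: inner_vec_def sum_distrib_left inner_complex_def algebra_simps)

lemma fold_mat_shift_system_tendsto_zero:
  fixes C :: "complex^'n^'n" and z h :: "real \<Rightarrow> complex^'n"
  assumes "\<forall>l\<in>set ls. Re l < 0"
    and "\<forall>\<^sub>F t in at_top. (z has_vector_derivative C *v z t + h t) (at t)"
    and "(h \<longlongrightarrow> 0) at_top"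
    and "\<forall>\<^sub>F t in at_top. fold (mat_shift C) ls (z t) = 0"
  shows "(z \<longlongrightarrow> 0) at_top"
  using assms
proof (induction ls arbitrary: z h)
  case Nil
  then show ?case
    by (simp add: tendsto_eventually)
next
  case (Cons l ls)
  define w where "w t = mat_shift C l (z t)" for t
  \<comment> \<open>\<open>w\<close> solves the same kind of system, one eigenvalue factor fewer.\<close>
  have "(w \<longlongrightarrow> 0) at_top"
  proof (rule Cons.IH)
    show "\<forall>\<^sub>F t in at_top. (w has_vector_derivative C *v w t + mat_shift C l (h t)) (at t)"
      using Cons.prems(2)
    proof eventually_elim
      case (elim t)
      have "mat_shift C l (C *v z t + h t) = C *v w t + mat_shift C l (h t)"
        by (simp add: w_def mat_shift_def matrix_vector_right_distrib vector_add_ldistrib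
            matrix_vector_mult_diff_distrib vector_scalar_commute)
      then show ?case
        using bounded_linear.has_vector_derivative[OF bounded_linear_mat_shift[of C l] elim]
        by (simp add: w_def[abs_def])
    qed
    show "((\<lambda>t. mat_shift C l (h t)) \<longlongrightarrow> 0) at_top"
      using bounded_linear.tendsto[OF bounded_linear_mat_shift Cons.prems(3)]
      by (simp add: mat_shift_def)
  qed (use Cons.prems(1,4) in \<open>simp_all add: w_def\<close>)
  show ?case
  proof (rule tendsto_zero_of_inner_deriv_le)
    show "- Re l > 0"
      using Cons.prems(1) by simp
    show "((\<lambda>t. w t + h t) \<longlongrightarrow> 0) at_top"
      using tendsto_add[OF \<open>(w \<longlongrightarrow> 0) at_top\<close> Cons.prems(3)] by simp
    show "\<forall>\<^sub>F t in at_top.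
        z t \<bullet> (C *v z t + h t) \<le> - (- Re l) * (norm (z t))\<^sup>2 + norm (z t) * norm (w t + h t)"
    proof (intro always_eventually allI)
      fix t
      have "C *v z t + h t = l *s z t + (w t + h t)"
        by (simp add: w_def mat_shift_def)
      then have "z t \<bullet> (C *v z t + h t) = Re l * (norm (z t))\<^sup>2 + z t \<bullet> (w t + h t)"
        by (simp add: inner_add_right inner_smult_self_right power2_norm_eq_inner)
      then show
        "z t \<bullet> (C *v z t + h t) \<le> - (- Re l) * (norm (z t))\<^sup>2 + norm (z t) * norm (w t + h t)"
        using norm_cauchy_schwarz[of "z t" "w t + h t"] by simp
    qed
  qed (use Cons.prems(2) in simp)
qed

definition cvec :: "real^'n \<Rightarrow> complex^'n" where
  "cvec v = (\<chi> i. complex_of_real (v $ i))"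

lemma bounded_linear_cvec: "bounded_linear cvec"
proof -
  have "linear cvec"
    by (rule linearI) (simp_all add: cvec_def vec_eq_iff complex_eq_iff)
  then show ?thesis
    by (simp add: linear_conv_bounded_linear)
qed

lemma cmat_mult_cvec: "cmat M *v cvec v = cvec (M *v v)"
  by (simp add: cvec_def cmat_def vec_eq_iff matrix_vector_mult_def)

lemma norm_cvec: "norm (cvec v) = norm v"
  by (simp add: cvec_def norm_vec_def)

lemma hurwitz_tendsto_zero:
  fixes M :: "real^'n^'n" and e g :: "real \<Rightarrow> real^'n"
  assumes "hurwitz M"
    and "\<forall>\<^sub>F t in at_top. (e has_vector_derivative M *v e t + g t) (at t)"
    and "(g \<longlongrightarrow> 0) at_top"
  shows "(e \<longlongrightarrow> 0) at_top"
proof -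
  interpret cvec: bounded_linear cvec
    by (rule bounded_linear_cvec)
  obtain ls where eig: "\<forall>l\<in>set ls. \<exists>v. v \<noteq> 0 \<and> cmat M *v v = l *s v"
    and annihilate: "\<And>v. fold (mat_shift (cmat M)) ls v = 0"
    using ex_eigenvalue_shifts_annihilate[of "cmat M"] by blast
  have "((\<lambda>t. cvec (e t)) \<longlongrightarrow> 0) at_top"
  proof (rule fold_mat_shift_system_tendsto_zero)
    show "\<forall>l\<in>set ls. Re l < 0"
      using eig \<open>hurwitz M\<close> unfolding hurwitz_def eigenvalue_def by blast
    show "\<forall>\<^sub>F t in at_top.
        ((\<lambda>t. cvec (e t)) has_vector_derivative cmat M *v cvec (e t) + cvec (g t)) (at t)"
      using assms(2)
      by eventually_elim (auto dest: cvec.has_vector_derivative simp: cmat_mult_cvec cvec.add)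
    show "((\<lambda>t. cvec (g t)) \<longlongrightarrow> 0) at_top"
      using cvec.tendsto[OF assms(3)] by (simp add: cvec.zero)
  qed (simp add: annihilate)
  then have "((\<lambda>t. norm (cvec (e t))) \<longlongrightarrow> 0) at_top"
    by (rule tendsto_norm_zero)
  then show ?thesis
    by (simp add: norm_cvec tendsto_norm_zero_iff)
qed

section \<open>Consensus along the spanning tree\<close>

lemma follower_tracks_leader:
  fixes A :: "real^'n^'n" and B :: "real^'m^'n" and F :: "real^'n^'m"
    and y z r :: "real \<Rightarrow> real^'n" and v w :: "real \<Rightarrow> real^'m"
  assumes "hurwitz (A - B ** F)"
    and y: "\<forall>\<^sub>F t in at_top. (y has_vector_derivative A *v y t + B *v v t) (at t)"
    and v: "\<forall>\<^sub>F t in at_top. v t = F *v (z t - y t)"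
    and z: "\<forall>\<^sub>F t in at_top. (z has_vector_derivative A *v z t + B *v w t) (at t)"
    and "((\<lambda>t. z t - r t) \<longlongrightarrow> 0) at_top" "(w \<longlongrightarrow> 0) at_top"
  shows "((\<lambda>t. y t - r t) \<longlongrightarrow> 0) at_top \<and> (v \<longlongrightarrow> 0) at_top"
proof
  have tracking: "((\<lambda>t. y t - z t) \<longlongrightarrow> 0) at_top"
  proof (rule hurwitz_tendsto_zero[OF assms(1)])
    show "\<forall>\<^sub>F t in at_top. ((\<lambda>t. y t - z t) has_vector_derivative
        (A - B ** F) *v (y t - z t) + - (B *v w t)) (at t)"
      using y v z
    proof eventually_elim
      case (elim t)
      have error_dynamics: "A *v y t + B *v v t - (A *v z t + B *v w t)
          = (A - B ** F) *v (y t - z t) + - (B *v w t)"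
        by (simp add: elim(2) matrix_vector_mul_assoc matrix_vector_mult_diff_distrib
            matrix_vector_mult_diff_rdistrib algebra_simps)
      show ?case
        using has_vector_derivative_diff[OF elim(1,3)] unfolding error_dynamics .
    qed
    show "((\<lambda>t. - (B *v w t)) \<longlongrightarrow> 0) at_top"
      using tendsto_minus[OF bounded_linear.tendsto[OF matrix_vector_mul_bounded_linear assms(6)]]
      by simp
  qed
  show "((\<lambda>t. y t - r t) \<longlongrightarrow> 0) at_top"
    using tendsto_add[OF tracking assms(5)] by simp
  have "((\<lambda>t. F *v (z t - y t)) \<longlongrightarrow> 0) at_top"
    using bounded_linear.tendsto[OF matrix_vector_mul_bounded_linear tendsto_minus[OF tracking]]
    by simp
  then show "(v \<longlongrightarrow> 0) at_top"
    using tendsto_cong[OF v] by simp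
qed

lemma eventually_has_vector_derivative_at:
  assumes "\<forall>t\<ge>a. (f has_vector_derivative f' t) (at t within {a..})"
  shows "\<forall>\<^sub>F t in at_top. (f has_vector_derivative f' t) (at t)"
  using eventually_gt_at_top[of a]
proof eventually_elim
  case (elim t)
  have "at t within {a..} = at t"
    using elim by (intro at_within_interior) simp
  moreover have "(f has_vector_derivative f' t) (at t within {a..})"
    using assms elim by simp
  ultimately show ?case
    by simp
qed

lemma spanning_tree_parent_induct [consumes 2, case_names root parent]:
  assumes "spanning_tree_parent N W k" "i \<in> {1..N}"
    and "P N" "\<And>i. i \<in> {1..N-1} \<Longrightarrow> P (k i) \<Longrightarrow> P i"
  shows "P i"
proof -
  have "P i" if "i \<in> {1..N}" "(k ^^ p) i = N" for p i
    using that
  proof (induction p arbitrary: i)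
    case (Suc p)
    show ?case
    proof (cases "i = N")
      case False
      with Suc.prems have "i \<in> {1..N-1}" by auto
      moreover have "k i \<in> {1..N}"
        using assms(1) \<open>i \<in> {1..N-1}\<close> unfolding spanning_tree_parent_def by blast
      ultimately show ?thesis
        using Suc.IH Suc.prems(2)[unfolded funpow_Suc_right comp_def] assms(4) by blast
    qed (simp add: assms(3))
  qed (simp add: assms(3))
  moreover have "\<exists>p. (k ^^ p) i = N"
    using assms(1,2) unfolding spanning_tree_parent_def
    by (cases "i = N") (auto intro: exI[of _ 0])
  ultimately show ?thesis
    using assms(2) by blast
qed

theorem theorem2:
  fixes A :: "real^'n^'n" and B :: "real^'m^'n"
    and N :: nat and W :: "nat \<Rightarrow> nat \<Rightarrow> real" and k :: "nat \<Rightarrow> nat"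
    and K :: "nat \<Rightarrow> real^'n^'m"
    and x :: "nat \<Rightarrow> real \<Rightarrow> real^'n" and u :: "nat \<Rightarrow> real \<Rightarrow> real^'m"
  assumes W_nonneg: "\<forall>i\<in>{1..N}. \<forall>j\<in>{1..N}. W i j \<ge> 0"
    and tree: "spanning_tree_parent N W k"
    and root: "root_vertex N W N"
    and gains: "\<forall>i\<in>{1..N-1}. hurwitz (A - W i (k i) *\<^sub>R (B ** K i))"
    and protocol_root: "\<forall>t\<ge>0. u N t = 0"
    and protocol: "\<forall>i\<in>{1..N-1}. \<forall>t\<ge>0. u i t = K i *v (W i (k i) *\<^sub>R (x (k i) t - x i t))"
    and dynamics: "\<forall>i\<in>{1..N}. \<forall>t\<ge>0.
        (x i has_vector_derivative (A *v x i t + B *v u i t)) (at t within {0..})"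
  shows "\<forall>i\<in>{1..N}. \<forall>j\<in>{1..N}. ((\<lambda>t. norm (x i t - x j t)) \<longlongrightarrow> 0) at_top"
proof -
  have dynamics_at: "\<forall>\<^sub>F t in at_top. (x i has_vector_derivative A *v x i t + B *v u i t) (at t)"
    if "i \<in> {1..N}" for i
    by (rule eventually_has_vector_derivative_at[where a = 0]) (use dynamics that in simp)
  have "\<forall>\<^sub>F t in at_top. u N t = 0"
    using eventually_ge_at_top[of 0] by eventually_elim (simp add: protocol_root)
  then have u_N: "(u N \<longlongrightarrow> 0) at_top"
    by (rule tendsto_eventually)
  have to_root: "((\<lambda>t. x i t - x N t) \<longlongrightarrow> 0) at_top \<and> (u i \<longlongrightarrow> 0) at_top"
    if "i \<in> {1..N}" for i
    using tree that
  proof (induction i rule: spanning_tree_parent_induct)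
    case root
    then show ?case
      using u_N by simp
  next
    case (parent i)
    then have "k i \<in> {1..N}"
      using tree unfolding spanning_tree_parent_def by blast
    show ?case
    proof (rule follower_tracks_leader
        [where F = "W i (k i) *\<^sub>R K i" and z = "x (k i)" and w = "u (k i)"])
      show "hurwitz (A - B ** (W i (k i) *\<^sub>R K i))"
        using gains parent by (simp add: matrix_scalar_ac scalar_matrix_assoc[symmetric])
      show "\<forall>\<^sub>F t in at_top. u i t = (W i (k i) *\<^sub>R K i) *v (x (k i) t - x i t)"
        using eventually_ge_at_top[of 0]
        by eventually_elim (use protocol parent in \<open>simp add: matrix_scaleR_vector_ac\<close>)
    qed (use parent \<open>k i \<in> {1..N}\<close> dynamics_at in auto)
  qed
  show ?thesis
  proof (intro ballI)
    fix i j
    assume "i \<in> {1..N}" "j \<in> {1..N}"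
    then have "((\<lambda>t. (x i t - x N t) - (x j t - x N t)) \<longlongrightarrow> 0 - 0) at_top"
      using to_root by (intro tendsto_diff) blast+
    then show "((\<lambda>t. norm (x i t - x j t)) \<longlongrightarrow> 0) at_top"
      by (simp add: tendsto_norm_zero_iff)
  qed
qed

end
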